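(* Let $a,n,r\in\mathbb{N}$ (so $r\ge1$), $k_1,\ldots,k_n\in\mathbb{N}$, and let $f_1,\ldots,f_n$ be arbitrary arithmetic functions. Then $$\frac{1}{K^{ar}}\sum_{j=1}^{K^a} j^r\prod_{i=1}^n\Bigl(\sum_{d_i|k_i,\ d_i^a|j}(f_i*\mu)(d_i)\Bigr)=\frac12\prod_{i=1}^n f_i(k_i)+\frac{1}{r+1}\sum_{m=0}^{\lfloor r/2\rfloor}\binom{r+1}{2m}\frac{B_{2m}}{K^{a(2m-1)}}\sum_{d_1|k_1,\ldots,d_n|k_n}\bigl(\operatorname{lcm}(d_1,\ldots,d_n)\bigr)^{a(2m-1)}\prod_{i=1}^n (f_i*\mu)(d_i).$$
   Context: An arithmetic function is a map $\mathbb{N}\to\mathbb{C}$; $\mu$ is the Möbius function and $(f*g)(n)=\sum_{d|n}f(d)g(n/d)$ the Dirichlet convolution. $K=\operatorname{lcm}(k_1,\ldots,k_n)$. The Bernoulli numbers $B_m$ are defined by $\frac{t}{e^t-1}=\sum_{m\ge0}B_m\frac{t^m}{m!}$. *)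

theory Defs
  imports Complex_Main "HOL-Computational_Algebra.Formal_Power_Series"
    "HOL-Computational_Algebra.Squarefree"
begin

text \<open>Dirichlet convolution of arithmetic functions (only meaningful for n >= 1).\<close>
definition dirichlet_conv :: "(nat \<Rightarrow> complex) \<Rightarrow> (nat \<Rightarrow> complex) \<Rightarrow> nat \<Rightarrow> complex" where
  "dirichlet_conv f g n = (\<Sum>d | d dvd n. f d * g (n div d))"

definition moebius :: "nat \<Rightarrow> complex" where
  "moebius n = (if squarefree n then (-1) ^ card (prime_factors n) else 0)"

definition bernoulli :: "nat \<Rightarrow> complex" where
  "bernoulli m = fact m * fps_nth (fps_X / (fps_exp 1 - 1) :: complex fps) m"

end

theory Submission
  imports Defs
begin

text \<open>
  Expanding the product over i turns the summand into a sum over tuples d of divisors d i of k i,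
  weighted by \<open>\<Prod>i. (f i * \<mu>)(d i)\<close> and restricted to those j that are multiples of
  \<open>lcm(d)\<^sup>a\<close>, a divisor of \<open>K\<^sup>a\<close>. For a fixed tuple, the sum of \<open>j\<^sup>r\<close> over these multiples is a
  power sum, which Faulhaber's formula expresses through Bernoulli numbers. Among the odd
  Bernoulli numbers only \<open>B\<^sub>1 = -1/2\<close> is nonzero; it produces the term
  \<open>1/2 \<Sum>\<^sub>d \<Prod>i. (f i * \<mu>)(d i)\<close>, which is \<open>\<Prod>i. f i (k i)\<close> by Moebius inversion.
\<close>

unbundle fps_syntax

definition bernoulli_fps :: "complex fps" where
  "bernoulli_fps = fps_X / (fps_exp 1 - 1)"

lemma bernoulli_conv_bernoulli_fps: "bernoulli m = fact m * bernoulli_fps $ m"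
  by (simp add: bernoulli_def bernoulli_fps_def)

lemma fps_exp_1_minus_1_nth: "(fps_exp 1 - 1 :: complex fps) $ n = (if n = 0 then 0 else 1 / fact n)"
  by (simp add: fps_exp_def)

lemma bernoulli_fps_times: "bernoulli_fps * (fps_exp 1 - 1) = fps_X"
proof -
  have "subdegree (fps_exp 1 - 1 :: complex fps) = 1"
    by (rule subdegreeI) (auto simp: fps_exp_1_minus_1_nth)
  then show ?thesis
    unfolding bernoulli_fps_def by (intro fps_times_divide_eq) auto
qed

lemma bernoulli_fps_reflect: "bernoulli_fps oo (-fps_X) = fps_X + bernoulli_fps"
proof -
  let ?B = "bernoulli_fps" and ?C = "bernoulli_fps oo (-fps_X)"
  have exp_reflect: "fps_exp (1::complex) oo (-fps_X) = fps_exp (-1)"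
    using fps_compose_linear[of 1 "-1"] fps_const_neg[of 1] by (simp add: fps_compose_linear)
  have reflected: "?C * (fps_exp (-1) - 1) = - fps_X"
    using fps_compose_mult_distrib[of "-fps_X" ?B "fps_exp 1 - 1"] bernoulli_fps_times
    by (simp add: fps_compose_sub_distrib exp_reflect)
  have exp_inverse: "fps_exp 1 * fps_exp (-1::complex) = 1"
    using fps_exp_add_mult[of "1::complex" "-1"] by simp
  have "- fps_X * fps_exp 1 = ?C * (fps_exp (-1) - 1) * fps_exp 1"
    by (simp add: reflected)
  also have "\<dots> = ?C * (fps_exp (-1) * fps_exp 1) - ?C * fps_exp 1"
    by (simp add: algebra_simps)
  also have "\<dots> = - (?C * (fps_exp 1 - 1))"
    by (simp add: exp_inverse algebra_simps)
  finally have "?C * (fps_exp 1 - 1) = fps_X * fps_exp 1"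
    by simp
  also have "\<dots> = (fps_X + ?B) * (fps_exp 1 - 1)"
    using bernoulli_fps_times by (simp add: algebra_simps)
  finally show ?thesis
    using fps_exp_1_minus_1_nth[of 1] by (auto dest: mult_right_cancel[THEN iffD1, rotated])
qed

lemma bernoulli_odd: "odd m \<Longrightarrow> bernoulli m = (if m = 1 then -1/2 else 0)"
proof -
  assume "odd m"
  have "(bernoulli_fps oo (-fps_X)) $ m = (fps_X + bernoulli_fps) $ m"
    by (simp only: bernoulli_fps_reflect)
  then have "- bernoulli_fps $ m = (if m = 1 then 1 else 0) + bernoulli_fps $ m"
    using \<open>odd m\<close> by (simp add: fps_compose_uminus')
  then show ?thesis
    by (cases "m = 1") (auto simp: bernoulli_conv_bernoulli_fps field_simps add_eq_0_iff)
qed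

lemma sum_fps_exp_times_fps_exp_minus_1:
  "(\<Sum>t<N. fps_exp (of_nat t :: complex)) * (fps_exp 1 - 1) = fps_exp (of_nat N) - 1"
proof (induction N)
  case (Suc N)
  have "fps_exp (of_nat N :: complex) * fps_exp 1 = fps_exp (of_nat (Suc N))"
    by (simp add: fps_exp_add_mult[symmetric] add.commute)
  with Suc show ?case
    by (simp add: algebra_simps)
qed simp

lemma sum_lessThan_powers:
  "(\<Sum>t<N. of_nat t ^ r :: complex) =
     1 / of_nat (r + 1) * (\<Sum>i=0..r. of_nat ((r + 1) choose i) * bernoulli i * of_nat N ^ (r + 1 - i))"
proof -
  let ?E = "fps_exp (of_nat N) - 1 :: complex fps"
  have generating_function: "fps_X * (\<Sum>t<N. fps_exp (of_nat t)) = bernoulli_fps * ?E"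
    using sum_fps_exp_times_fps_exp_minus_1[of N] bernoulli_fps_times
    by (metis mult.assoc mult.commute)
  have "(\<Sum>t<N. of_nat t ^ r :: complex) / fact r = (fps_X * (\<Sum>t<N. fps_exp (of_nat t))) $ Suc r"
    by (simp add: fps_sum_nth sum_divide_distrib)
  also have "\<dots> = (bernoulli_fps * ?E) $ Suc r"
    by (simp only: generating_function)
  also have "\<dots> = (\<Sum>i=0..r. bernoulli_fps $ i * of_nat N ^ (r + 1 - i) / fact (r + 1 - i))"
    by (simp add: fps_mult_nth sum.atLeast0_atMost_Suc Suc_diff_le)
  finally have "(\<Sum>t<N. of_nat t ^ r :: complex) =
      (\<Sum>i=0..r. fact r * bernoulli_fps $ i * of_nat N ^ (r + 1 - i) / fact (r + 1 - i))"
    by (simp add: field_simps sum_distrib_left)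
  also have "\<dots> = (\<Sum>i=0..r. 1 / of_nat (r + 1) * (of_nat ((r + 1) choose i) * bernoulli i * of_nat N ^ (r + 1 - i)))"
  proof (intro sum.cong refl)
    fix i assume "i \<in> {0..r}"
    then have "of_nat ((r + 1) choose i) = (fact (r + 1) / (fact i * fact (r + 1 - i)) :: complex)"
      by (intro binomial_fact) simp
    then show "fact r * bernoulli_fps $ i * of_nat N ^ (r + 1 - i) / fact (r + 1 - i) =
        1 / of_nat (r + 1) * (of_nat ((r + 1) choose i) * bernoulli i * of_nat N ^ (r + 1 - i))"
      by (simp add: bernoulli_conv_bernoulli_fps field_simps del: of_nat_Suc)
  qed
  finally show ?thesis
    by (simp add: sum_distrib_left)
qed

lemma sum_even_indices:
  fixes c :: "nat \<Rightarrow> 'a :: comm_monoid_add"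
  shows "(\<Sum>i=0..r. if even i then c i else 0) = (\<Sum>m=0..r div 2. c (2 * m))"
proof -
  have "{i \<in> {0..r}. even i} = (\<lambda>m. 2 * m) ` {0..r div 2}"
    by (auto elim!: evenE)
  then show ?thesis
    by (simp add: sum.inter_filter[symmetric] sum.reindex inj_on_def)
qed

lemma sum_powers_faulhaber:
  assumes "r \<ge> 1"
  shows "(\<Sum>t=1..N. of_nat t ^ r :: complex) = of_nat N ^ r / 2 + 1 / of_nat (r + 1) *
    (\<Sum>m=0..r div 2. of_nat ((r + 1) choose (2 * m)) * bernoulli (2 * m) * of_nat N ^ (r + 1 - 2 * m))"
proof -
  define c where "c i = of_nat ((r + 1) choose i) * bernoulli i * (of_nat N ^ (r + 1 - i) :: complex)" for i
  define h where "h = of_nat (r + 1) * of_nat N ^ r / (2 :: complex)"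
  have odd_terms: "c i = (if i = 1 then - h else 0)" if "odd i" for i
    using that by (auto simp: c_def h_def bernoulli_odd)
  have "(\<Sum>i=0..r. c i) = (\<Sum>i=0..r. if even i then c i else 0) + (\<Sum>i=0..r. if i = 1 then c i else 0)"
    unfolding sum.distrib[symmetric] by (rule sum.cong[OF refl]) (auto simp: odd_terms)
  also have "\<dots> = (\<Sum>m=0..r div 2. c (2 * m)) - h"
    using assms by (simp add: sum_even_indices odd_terms)
  finally have bernoulli_sum: "(\<Sum>i=0..r. c i) = (\<Sum>m=0..r div 2. c (2 * m)) - h" .
  have "(\<Sum>t=1..N. of_nat t ^ r :: complex) = (\<Sum>t<N. of_nat t ^ r) + of_nat N ^ r"
    using assms by (simp add: sum_shift_lb_Suc0_0 atLeast0AtMost lessThan_Suc_atMost[symmetric])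
  also have "\<dots> = 1 / of_nat (r + 1) * (\<Sum>i=0..r. c i) + of_nat N ^ r"
    by (simp add: sum_lessThan_powers c_def)
  also have "\<dots> = 1 / of_nat (r + 1) * (\<Sum>m=0..r div 2. c (2 * m)) + (of_nat N ^ r - 1 / of_nat (r + 1) * h)"
    by (simp add: bernoulli_sum right_diff_distrib)
  also have "of_nat N ^ r - 1 / of_nat (r + 1) * h = of_nat N ^ r / 2"
    by (simp add: h_def field_simps del: of_nat_Suc)
  finally show ?thesis
    by (simp add: c_def add.commute)
qed

lemma sum_multiples_powers:
  assumes "M > 0"
  shows "(\<Sum>j=1..M * q. if M dvd j then of_nat j ^ r else 0 :: 'a :: comm_semiring_1) =
    of_nat M ^ r * (\<Sum>t=1..q. of_nat t ^ r)"
proof -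
  have "{j \<in> {1..M * q}. M dvd j} = (\<lambda>t. M * t) ` {1..q}"
    using assms by (auto elim!: dvdE)
  then show ?thesis
    using assms by (simp add: sum.inter_filter[symmetric] sum.reindex inj_on_def sum_distrib_left power_mult_distrib)
qed

lemma power_ratio_eq_power_int:
  assumes "q > 0" "2 * m \<le> r"
  shows "(of_nat q ^ (r + 1 - 2 * m) / of_nat q ^ r :: complex) = (1 / of_nat q) powi (2 * int m - 1)"
proof -
  have "(of_nat q ^ (r + 1 - 2 * m) / of_nat q ^ r :: complex) =
      of_nat q powi int (r + 1 - 2 * m) / of_nat q powi int r"
    by (simp only: power_int_of_nat)
  also have "\<dots> = of_nat q powi (int (r + 1 - 2 * m) - int r)"
    by (rule power_int_diff[symmetric]) (use assms in simp)
  also have "int (r + 1 - 2 * m) - int r = - (2 * int m - 1)"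
    using assms by simp
  finally show ?thesis
    by (simp only: power_int_minus_divide power_int_divide_distrib power_int_1_left)
qed

lemma normalized_sum_multiples_powers:
  assumes "N > 0" "M dvd N" "r \<ge> 1"
  shows "1 / of_nat N ^ r * (\<Sum>j=1..N. if M dvd j then of_nat j ^ r else 0) =
    1 / 2 + 1 / of_nat (r + 1) * (\<Sum>m=0..r div 2. of_nat ((r + 1) choose (2 * m)) * bernoulli (2 * m)
      * (of_nat M / of_nat N :: complex) powi (2 * int m - 1))"
proof -
  obtain q where N: "N = M * q" using assms(2) by blast
  with assms(1) have "M > 0" "q > 0" by auto
  have ratio: "(of_nat M / of_nat N :: complex) = 1 / of_nat q"
    using \<open>M > 0\<close> by (simp add: N)
  have "1 / of_nat N ^ r * (\<Sum>j=1..N. if M dvd j then of_nat j ^ r else 0) =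
      1 / of_nat q ^ r * (\<Sum>t=1..q. of_nat t ^ r :: complex)"
    unfolding N sum_multiples_powers[OF \<open>M > 0\<close>] using \<open>M > 0\<close> by (simp add: power_mult_distrib)
  also have "\<dots> = 1 / 2 + 1 / of_nat (r + 1) * (\<Sum>m=0..r div 2. of_nat ((r + 1) choose (2 * m)) * bernoulli (2 * m)
      * (of_nat q ^ (r + 1 - 2 * m) / of_nat q ^ r))"
    unfolding sum_powers_faulhaber[OF assms(3)] using \<open>q > 0\<close>
    by (simp add: ring_distribs sum_distrib_left mult_ac)
  also have "\<dots> = 1 / 2 + 1 / of_nat (r + 1) * (\<Sum>m=0..r div 2. of_nat ((r + 1) choose (2 * m)) * bernoulli (2 * m)
      * (of_nat M / of_nat N :: complex) powi (2 * int m - 1))"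
    unfolding ratio using \<open>q > 0\<close>
    by (intro arg_cong2[where f = "(+)"] arg_cong2[where f = "(*)"] refl sum.cong)
      (auto simp only: power_ratio_eq_power_int atLeastAtMost_iff)
  finally show ?thesis .
qed

lemma lcm_power_nat: "lcm (x ^ a) (y ^ a) = lcm x y ^ a" for x y :: nat
  by (simp add: lcm_nat_def div_power power_mult_distrib dvd_mult)

lemma Lcm_image_power_nat:
  fixes d :: "'i \<Rightarrow> nat"
  assumes "finite A"
  shows "Lcm ((\<lambda>i. d i ^ a) ` A) = Lcm (d ` A) ^ a"
  using assms by (induction A rule: finite_induct) (auto simp: lcm_power_nat)

lemma all_power_dvd_iff_Lcm_power_dvd:
  fixes d :: "'i \<Rightarrow> nat"
  assumes "finite A"
  shows "(\<forall>i\<in>A. d i ^ a dvd j) \<longleftrightarrow> Lcm (d ` A) ^ a dvd j"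
  unfolding Lcm_image_power_nat[OF assms, symmetric] by (simp add: Lcm_dvd_iff)

lemma Lcm_image_pos_nat:
  fixes d :: "'i \<Rightarrow> nat"
  assumes "finite A" "\<forall>i\<in>A. d i > 0"
  shows "Lcm (d ` A) > 0"
  using assms by (metis Lcm_0_iff finite_imageI imageE neq0_conv)

lemma prod_if_else_zero:
  fixes g :: "'i \<Rightarrow> 'a :: comm_semiring_1"
  assumes "finite A"
  shows "(\<Prod>i\<in>A. if P i then g i else 0) = (if \<forall>i\<in>A. P i then prod g A else 0)"
  using assms by (cases "\<forall>i\<in>A. P i") (auto intro: prod.cong intro!: prod_zero)

lemma prod_sum_divisors_power_dvd:
  fixes g :: "'i \<Rightarrow> nat \<Rightarrow> 'a :: comm_semiring_1"
  assumes "finite I" "\<forall>i\<in>I. k i > 0"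
  shows "(\<Prod>i\<in>I. \<Sum>e | e dvd k i \<and> e ^ a dvd j. g i e) =
    (\<Sum>d\<in>Pi\<^sub>E I (\<lambda>i. {e. e dvd k i}). if Lcm (d ` I) ^ a dvd j then \<Prod>i\<in>I. g i (d i) else 0)"
proof -
  have "(\<Prod>i\<in>I. \<Sum>e | e dvd k i \<and> e ^ a dvd j. g i e) =
      (\<Prod>i\<in>I. \<Sum>e | e dvd k i. if e ^ a dvd j then g i e else 0)"
  proof (intro prod.cong refl)
    fix i assume "i \<in> I"
    then have "finite {e. e dvd k i}"
      using assms(2) by simp
    from sum.inter_filter[OF this] show "(\<Sum>e | e dvd k i \<and> e ^ a dvd j. g i e) =
        (\<Sum>e | e dvd k i. if e ^ a dvd j then g i e else 0)"
      by simp
  qed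
  also have "\<dots> = (\<Sum>d\<in>Pi\<^sub>E I (\<lambda>i. {e. e dvd k i}). \<Prod>i\<in>I. if d i ^ a dvd j then g i (d i) else 0)"
    using assms by (intro prod_sum_PiE) auto
  finally show ?thesis
    using assms(1) by (simp add: prod_if_else_zero all_power_dvd_iff_Lcm_power_dvd)
qed

lemma prime_factors_prod_primes:
  fixes S :: "nat set"
  assumes "finite S" "\<forall>p\<in>S. prime p"
  shows "prime_factors (\<Prod>S) = S"
  using assms by (subst prime_factors_prod) (auto simp: prime_prime_factors)

lemma squarefree_prod_primes:
  fixes S :: "nat set"
  assumes "\<forall>p\<in>S. prime p"
  shows "squarefree (\<Prod>S)"
  using assms by (intro squarefree_prod_coprime) (auto simp: primes_coprime squarefree_prime)

lemma prod_prime_factors_squarefree: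
  fixes d :: nat
  assumes "squarefree d"
  shows "\<Prod>(prime_factors d) = d"
proof -
  have "d \<noteq> 0"
    using assms by (metis not_squarefree_0)
  then show ?thesis
    using prod_prime_factors[of d] assms by (simp add: squarefree_factorial_semiring')
qed

lemma prod_dvd_of_subset_prime_factors:
  fixes m :: nat
  assumes "m > 0" "S \<subseteq> prime_factors m"
  shows "\<Prod>S dvd m"
proof -
  have "p dvd p ^ multiplicity p m" if "p \<in> prime_factors m" for p
    using that by (intro dvd_power) (auto simp: prime_factors_multiplicity)
  then have "\<Prod>S dvd (\<Prod>p\<in>prime_factors m. p ^ multiplicity p m)"
    using assms by (intro prod_dvd_prod_subset2) auto
  then show ?thesis
    using assms(1) by (simp add: prod_prime_factors)
qed

lemma sum_moebius_divisors:
  assumes "m > 0"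
  shows "(\<Sum>d | d dvd m. moebius d) = (if m = 1 then 1 else 0)"
proof -
  define P where "P = prime_factors m"
  have "(\<Sum>d | d dvd m. moebius d) = (\<Sum>d | d dvd m \<and> squarefree d. (-1) ^ card (prime_factors d))"
    using assms by (intro sum.mono_neutral_cong_right) (auto simp: moebius_def)
  also have "\<dots> = (\<Sum>S\<in>Pow P. (-1) ^ card S :: complex)"
  proof (rule sum.reindex_bij_witness[where i = Prod and j = prime_factors])
    fix S assume "S \<in> Pow P"
    then have S: "finite S" "\<forall>p\<in>S. prime p" "S \<subseteq> prime_factors m"
      by (auto simp: P_def intro: finite_subset)
    then show "prime_factors (\<Prod>S) = S"
      by (simp add: prime_factors_prod_primes)
    show "\<Prod>S \<in> {d. d dvd m \<and> squarefree d}"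
      using S assms by (simp add: squarefree_prod_primes prod_dvd_of_subset_prime_factors)
  next
    fix d assume "d \<in> {d. d dvd m \<and> squarefree d}"
    then show "\<Prod>(prime_factors d) = d" "prime_factors d \<in> Pow P"
      using assms by (auto simp: P_def prod_prime_factors_squarefree dvd_prime_factors)
  qed simp
  also have "\<dots> = (\<Prod>p\<in>P. 1 - 1 :: complex)"
    using prod_diff_conv_sum[of P "\<lambda>_. 1 :: complex" "\<lambda>_. 1"] by (simp add: P_def)
  also have "\<dots> = (if m = 1 then 1 else 0)"
    using assms by (auto simp: P_def card_gt_0_iff prime_factorization_empty_iff)
  finally show ?thesis .
qed

lemma sum_divisors_dirichlet_conv_moebius:
  assumes "k > 0"
  shows "(\<Sum>d | d dvd k. dirichlet_conv f moebius d) = f k"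
proof -
  have "(\<Sum>d | d dvd k. dirichlet_conv f moebius d) =
      (\<Sum>(d, e) \<in> Sigma {d. d dvd k} (\<lambda>d. {e. e dvd d}). f e * moebius (d div e))"
    unfolding dirichlet_conv_def using assms by (subst sum.Sigma) auto
  also have "\<dots> = (\<Sum>(e, c) \<in> Sigma {e. e dvd k} (\<lambda>e. {c. c dvd k div e}). f e * moebius c)"
    using assms
    by (intro sum.reindex_bij_witness[where i = "\<lambda>(e, c). (e * c, e)" and j = "\<lambda>(d, e). (e, d div e)"])
      (auto intro: dvd_trans div_dvd_div simp: dvd_div_iff_mult mult.commute)
  also have "\<dots> = (\<Sum>e | e dvd k. f e * (\<Sum>c | c dvd k div e. moebius c))"
    using assms by (subst sum.Sigma[symmetric]) (auto simp: sum_distrib_left)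
  also have "\<dots> = (\<Sum>e | e dvd k. if e = k then f e else 0)"
  proof (intro sum.cong refl)
    fix e assume "e \<in> {e. e dvd k}"
    then obtain q where "k = e * q" by auto
    with assms show "f e * (\<Sum>c | c dvd k div e. moebius c) = (if e = k then f e else 0)"
      by (simp add: sum_moebius_divisors)
  qed
  also have "\<dots> = f k"
    using assms by simp
  finally show ?thesis .
qed

lemma power_divide_power_powi:
  "(x ^ a / y ^ a :: 'a :: field) powi e = x powi (int a * e) / y powi (int a * e)"
  by (simp add: power_divide[symmetric] power_int_power power_int_divide_distrib)

lemma normalized_sum_powers_weighted_multiples:
  fixes P :: "'d \<Rightarrow> complex" and L :: "'d \<Rightarrow> nat"
  assumes "K > 0" "r \<ge> 1" "\<forall>d\<in>D. L d dvd K"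
  shows "1 / of_nat K ^ (a * r) * (\<Sum>j = 1..K ^ a. of_nat j ^ r * (\<Sum>d\<in>D. if L d ^ a dvd j then P d else 0)) =
    1 / 2 * (\<Sum>d\<in>D. P d) + 1 / of_nat (r + 1) *
      (\<Sum>m = 0..r div 2. of_nat ((r + 1) choose (2 * m)) * bernoulli (2 * m) / of_nat K powi (int a * (2 * int m - 1))
        * (\<Sum>d\<in>D. of_nat (L d) powi (int a * (2 * int m - 1)) * P d))"
proof -
  define E where "E m = int a * (2 * int m - 1)" for m :: nat
  define C where "C m = of_nat ((r + 1) choose (2 * m)) * bernoulli (2 * m)" for m :: nat
  have per_term: "1 / of_nat K ^ (a * r) * (\<Sum>j = 1..K ^ a. if L d ^ a dvd j then of_nat j ^ r else 0) =
      1 / 2 + 1 / of_nat (r + 1) * (\<Sum>m = 0..r div 2. C m * of_nat (L d) powi E m / of_nat K powi E m)"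
    if "d \<in> D" for d
    using normalized_sum_multiples_powers[of "K ^ a" "L d ^ a" r] assms that
    by (simp add: power_mult dvd_power_same C_def E_def power_divide_power_powi)
  have "1 / of_nat K ^ (a * r) * (\<Sum>j = 1..K ^ a. of_nat j ^ r * (\<Sum>d\<in>D. if L d ^ a dvd j then P d else 0))
      = (\<Sum>d\<in>D. P d * (1 / of_nat K ^ (a * r) *
          (\<Sum>j = 1..K ^ a. if L d ^ a dvd j then of_nat j ^ r else 0)))"
    unfolding sum_distrib_left by (subst sum.swap) (auto simp: mult_ac intro!: sum.cong)
  also have "\<dots> = (\<Sum>d\<in>D. P d * (1 / 2 + 1 / of_nat (r + 1) *
      (\<Sum>m = 0..r div 2. C m * of_nat (L d) powi E m / of_nat K powi E m)))"
    by (intro sum.cong refl) (simp only: per_term)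
  also have "\<dots> = (\<Sum>d\<in>D. 1 / 2 * P d + 1 / of_nat (r + 1) *
      (\<Sum>m = 0..r div 2. C m / of_nat K powi E m * (of_nat (L d) powi E m * P d)))"
    by (intro sum.cong refl) (simp add: ring_distribs sum_distrib_left mult_ac)
  also have "\<dots> = 1 / 2 * (\<Sum>d\<in>D. P d) + 1 / of_nat (r + 1) *
      (\<Sum>m = 0..r div 2. C m / of_nat K powi E m * (\<Sum>d\<in>D. of_nat (L d) powi E m * P d))"
    by (simp only: sum.distrib sum_distrib_left sum.swap[of _ D])
  finally show ?thesis
    by (simp only: C_def E_def)
qed

theorem mainTheorem3:
  fixes a n r :: nat and k :: "nat \<Rightarrow> nat" and f :: "nat \<Rightarrow> nat \<Rightarrow> complex"
  assumes "a \<ge> 1" "n \<ge> 1" "r \<ge> 1" "\<And>i. i \<in> {1..n} \<Longrightarrow> k i \<ge> 1"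
  defines "K \<equiv> Lcm (k ` {1..n})"
  shows "(1 / of_nat K ^ (a * r)) *
      (\<Sum>j = 1..K ^ a. of_nat j ^ r *
         (\<Prod>i = 1..n. \<Sum>d | d dvd k i \<and> d ^ a dvd j. dirichlet_conv (f i) moebius d))
    = (1/2) * (\<Prod>i = 1..n. f i (k i))
      + (1 / of_nat (r + 1)) *
        (\<Sum>m = 0..r div 2. of_nat ((r + 1) choose (2 * m)) * bernoulli (2 * m)
           / (of_nat K powi (int a * (2 * int m - 1)))
           * (\<Sum>d \<in> Pi\<^sub>E {1..n} (\<lambda>i. {e. e dvd k i}).
                (of_nat (Lcm (d ` {1..n}))) powi (int a * (2 * int m - 1))
                * (\<Prod>i = 1..n. dirichlet_conv (f i) moebius (d i))))"
proof -
  have k_pos: "\<forall>i\<in>{1..n}. k i > 0"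
    using assms(4) by fastforce
  then have "K > 0"
    unfolding K_def by (simp add: Lcm_image_pos_nat)
  have Lcm_dvd_K: "\<forall>d \<in> Pi\<^sub>E {1..n} (\<lambda>i. {e. e dvd k i}). Lcm (d ` {1..n}) dvd K"
    unfolding K_def by (auto intro!: Lcm_mono)
  have "(\<Sum>d \<in> Pi\<^sub>E {1..n} (\<lambda>i. {e. e dvd k i}). \<Prod>i = 1..n. dirichlet_conv (f i) moebius (d i)) =
      (\<Prod>i = 1..n. f i (k i))"
    using k_pos by (subst prod_sum_PiE[symmetric]) (auto simp: sum_divisors_dirichlet_conv_moebius)
  then show ?thesis
    using normalized_sum_powers_weighted_multiples[OF \<open>K > 0\<close> assms(3) Lcm_dvd_K, of a]
    by (simp only: prod_sum_divisors_power_dvd[OF _ k_pos] finite_atLeastAtMost)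
qed

end
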